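(* Let $k\ge 2$. If $G$ is a finite simple graph admitting a closed neighborhood balanced $k$-coloring and $H$ is any finite simple graph, then the strong product $G\boxtimes H$ admits a closed neighborhood balanced $k$-coloring.
   Context: For a vertex $v$, $N[v]=\{v\}\cup\{u : uv\in E\}$. A closed neighborhood balanced $k$-coloring of a graph is a map $c: V\to\{1,\dots,k\}$ such that for every vertex $v$ the numbers $|\{u\in N[v] : c(u)=i\}|$, $i=1,\dots,k$, are all equal. The strong product $G\boxtimes H$ has vertex set $V(G)\times V(H)$, with $(g,h)$ adjacent to $(g',h')$ iff ($g=g'$ and $hh'\in E(H)$) or ($h=h'$ and $gg'\in E(G)$) or ($gg'\in E(G)$ and $hh'\in E(H)$). *)

theory Defs
  imports Main
begin

definition simple_graph :: "'a set \<Rightarrow> 'a set set \<Rightarrow> bool" where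
  "simple_graph V E \<longleftrightarrow> finite V \<and> (\<forall>e\<in>E. e \<subseteq> V \<and> card e = 2)"

definition closed_nbhd :: "'a set \<Rightarrow> 'a set set \<Rightarrow> 'a \<Rightarrow> 'a set" where
  "closed_nbhd V E v = {v} \<union> {u \<in> V. {u, v} \<in> E}"

definition cnb_coloring :: "'a set \<Rightarrow> 'a set set \<Rightarrow> nat \<Rightarrow> ('a \<Rightarrow> nat) \<Rightarrow> bool" where
  "cnb_coloring V E k c \<longleftrightarrow>
     (\<forall>v\<in>V. c v \<in> {1..k}) \<and>
     (\<forall>v\<in>V. \<forall>i\<in>{1..k}. \<forall>j\<in>{1..k}.
        card {u \<in> closed_nbhd V E v. c u = i} = card {u \<in> closed_nbhd V E v. c u = j})"

definition has_cnb_coloring :: "'a set \<Rightarrow> 'a set set \<Rightarrow> nat \<Rightarrow> bool" where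
  "has_cnb_coloring V E k \<longleftrightarrow> (\<exists>c. cnb_coloring V E k c)"

definition strong_product_edges ::
  "'a set \<Rightarrow> 'a set set \<Rightarrow> 'b set \<Rightarrow> 'b set set \<Rightarrow> ('a \<times> 'b) set set" where
  "strong_product_edges VG EG VH EH =
     {{(g, h), (g', h')} | g h g' h'.
        g \<in> VG \<and> g' \<in> VG \<and> h \<in> VH \<and> h' \<in> VH \<and>
        ((g = g' \<and> {h, h'} \<in> EH) \<or> (h = h' \<and> {g, g'} \<in> EG) \<or>
         ({g, g'} \<in> EG \<and> {h, h'} \<in> EH))}"

end

theory Submission
  imports Defs
begin

text \<open>Closed neighbourhoods in the strong product are products of closed neighbourhoods,
  so colouring (g, h) by the colour of g multiplies every colour count at (g, h)
  by the same factor, the size of the closed neighbourhood of h.\<close>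

lemma doubleton_mem_strong_product_edges_iff:
  assumes "g \<in> VG" "g' \<in> VG" "h \<in> VH" "h' \<in> VH"
  shows "{(g, h), (g', h')} \<in> strong_product_edges VG EG VH EH \<longleftrightarrow>
         (g = g' \<and> {h, h'} \<in> EH) \<or> (h = h' \<and> {g, g'} \<in> EG) \<or>
         ({g, g'} \<in> EG \<and> {h, h'} \<in> EH)"
proof
  assume "{(g, h), (g', h')} \<in> strong_product_edges VG EG VH EH"
  then obtain a b a' b' where
      ends: "{(g, h), (g', h')} = {(a, b), (a', b')}"
    and adj: "(a = a' \<and> {b, b'} \<in> EH) \<or> (b = b' \<and> {a, a'} \<in> EG) \<or>
              ({a, a'} \<in> EG \<and> {b, b'} \<in> EH)"
    unfolding strong_product_edges_def by blast
  from ends have "(a, b, a', b') = (g, h, g', h') \<or> (a, b, a', b') = (g', h', g, h)"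
    by (auto simp: doubleton_eq_iff)
  with adj show "(g = g' \<and> {h, h'} \<in> EH) \<or> (h = h' \<and> {g, g'} \<in> EG) \<or>
                 ({g, g'} \<in> EG \<and> {h, h'} \<in> EH)"
    by (auto simp: insert_commute)
next
  assume "(g = g' \<and> {h, h'} \<in> EH) \<or> (h = h' \<and> {g, g'} \<in> EG) \<or>
          ({g, g'} \<in> EG \<and> {h, h'} \<in> EH)"
  with assms show "{(g, h), (g', h')} \<in> strong_product_edges VG EG VH EH"
    unfolding strong_product_edges_def by blast
qed

lemma closed_nbhd_strong_product:
  assumes "g \<in> VG" "h \<in> VH"
  shows "closed_nbhd (VG \<times> VH) (strong_product_edges VG EG VH EH) (g, h)
       = closed_nbhd VG EG g \<times> closed_nbhd VH EH h"
proof (intro set_eqI iffI)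
  fix x assume x: "x \<in> closed_nbhd (VG \<times> VH) (strong_product_edges VG EG VH EH) (g, h)"
  show "x \<in> closed_nbhd VG EG g \<times> closed_nbhd VH EH h"
  proof (cases "x = (g, h)")
    case True
    then show ?thesis by (simp add: closed_nbhd_def)
  next
    case False
    with x obtain g' h' where "x = (g', h')" "g' \<in> VG" "h' \<in> VH"
      and "{(g', h'), (g, h)} \<in> strong_product_edges VG EG VH EH"
      unfolding closed_nbhd_def by auto
    with assms show ?thesis
      by (auto simp: closed_nbhd_def doubleton_mem_strong_product_edges_iff)
  qed
next
  fix x assume x: "x \<in> closed_nbhd VG EG g \<times> closed_nbhd VH EH h"
  then obtain g' h' where "x = (g', h')"
    and g': "g' = g \<or> (g' \<in> VG \<and> {g', g} \<in> EG)"
    and h': "h' = h \<or> (h' \<in> VH \<and> {h', h} \<in> EH)"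
    unfolding closed_nbhd_def by auto
  with assms show "x \<in> closed_nbhd (VG \<times> VH) (strong_product_edges VG EG VH EH) (g, h)"
    by (auto simp: closed_nbhd_def doubleton_mem_strong_product_edges_iff)
qed

lemma cnb_coloring_strong_product:
  assumes "cnb_coloring VG EG k c"
  shows "cnb_coloring (VG \<times> VH) (strong_product_edges VG EG VH EH) k (c \<circ> fst)"
  unfolding cnb_coloring_def
proof (intro conjI ballI)
  fix v assume "v \<in> VG \<times> VH"
  with assms show "(c \<circ> fst) v \<in> {1..k}"
    unfolding cnb_coloring_def by auto
next
  fix v i j assume v: "v \<in> VG \<times> VH" and ij: "i \<in> {1..k}" "j \<in> {1..k}"
  then obtain g h where gh: "v = (g, h)" "g \<in> VG" "h \<in> VH" by auto
  have colour_class: "{u \<in> closed_nbhd (VG \<times> VH) (strong_product_edges VG EG VH EH) v.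
                         (c \<circ> fst) u = l}
                      = {u \<in> closed_nbhd VG EG g. c u = l} \<times> closed_nbhd VH EH h" for l
    using closed_nbhd_strong_product[OF gh(2,3)] gh(1) by auto
  have "card {u \<in> closed_nbhd VG EG g. c u = i} = card {u \<in> closed_nbhd VG EG g. c u = j}"
    using assms gh ij unfolding cnb_coloring_def by blast
  then show "card {u \<in> closed_nbhd (VG \<times> VH) (strong_product_edges VG EG VH EH) v.
                     (c \<circ> fst) u = i}
           = card {u \<in> closed_nbhd (VG \<times> VH) (strong_product_edges VG EG VH EH) v.
                     (c \<circ> fst) u = j}"
    unfolding colour_class card_cartesian_product by simp
qed

theorem theorem2p18:
  fixes VG :: "'a set" and EG :: "'a set set" and VH :: "'b set" and EH :: "'b set set"
    and k :: nat
  assumes "k \<ge> 2"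
    and "simple_graph VG EG" and "simple_graph VH EH"
    and "has_cnb_coloring VG EG k"
  shows "has_cnb_coloring (VG \<times> VH) (strong_product_edges VG EG VH EH) k"
  using assms(4) cnb_coloring_strong_product
  unfolding has_cnb_coloring_def by blast

end
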